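(* Let $m\ge 1$ and $s\in\{-,+\}$, and let $s'$ denote the opposite sign. For every polynomial $\hat\phi^s\in\mathbb{P}_m$, considered on $\hat K_F^s$, there exists a unique polynomial $\hat\phi^{s'}\in\mathbb{P}_m$, considered on $\hat K_F^{s'}$, such that the piecewise function $$\hat\phi(\eta,\xi)=\begin{cases}\hat\phi^-(\eta,\xi),&(\eta,\xi)\in\hat K_F^-,\\ \hat\phi^+(\eta,\xi),&(\eta,\xi)\in\hat K_F^+\end{cases}$$ satisfies the interface conditions (C1), (C2) and (C3).
   Context: Frenet coordinates $(\eta,\xi)$; $\mathbb{P}_m$ denotes bivariate polynomials of total degree at most $m$. The set $\hat K_F$ is a bounded region of the $(\eta,\xi)$-plane that is cut by the line $\eta=0$ into $\hat K_F^-=\hat K_F\cap\{\eta<0\}$ and $\hat K_F^+=\hat K_F\cap\{\eta>0\}$. The interface segment is $\hat\Gamma_{K_F}=\{(0,\xi):\xi_0\le\xi\le\xi_1\}\subset\overline{\hat K_F}$ with $\xi_0<\xi_1$. The coefficient $\hat\beta$ equals the positive constant $\beta^-$ on $\hat K_F^-$ and the positive constant $\beta^+$ on $\hat K_F^+$. For a function $\hat w$ that is smooth up to $\eta=0$ from each side, its jump is $[\![\hat w]\!]_{\hat\Gamma_{K_F}}(\xi)=\hat w^+(0,\xi)-\hat w^-(0,\xi)$, where $\hat w^\pm$ are the restrictions of $\hat w$ to $\hat K_F^\pm$. The operator $\mathscr{L}$ is the transformed Laplacian $$\mathscr{L}(\hat u)=\hat u_{\eta\eta}+J_0(\eta,\xi)\hat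 u_{\xi\xi}+J_1(\eta,\xi)\hat u_\eta+J_2(\eta,\xi)\hat u_\xi .$$ Here $J_0,J_1,J_2$ are fixed smooth real-valued functions on $\overline{\hat K_F}$ determined by the geometry (curvature and parametrization) of the interface curve; they are the same on both sides of $\eta=0$. A piecewise function $\hat u$ with $\hat u|_{\hat K_F^\pm}\in\mathbb{P}_m$ satisfies the interface conditions if: - (C1) $[\![\hat u]\!]_{\hat\Gamma_{K_F}}=0$ for all $\xi\in[\xi_0,\xi_1]$; - (C2) $[\![\hat\beta\,\hat u_\eta]\!]_{\hat\Gamma_{K_F}}=0$ for all $\xi\in[\xi_0,\xi_1]$; - (C3) for every $j=0,1,\dots,m-2$ and every $\hat v\in\mathbb{P}_{m-2-j}(\hat\Gamma_{K_F})$, $$\int_{\xi_0}^{\xi_1}\hat v(\xi)\,[\![\hat\beta\,\partial_\eta^j\mathscr{L}(\hat u)]\!]_{\hat\Gamma_{K_F}}(\xi)\,d\xi=0.$$ Condition (C3) is vacuous when $m=1$. *)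

theory Defs
  imports "HOL-Analysis.Analysis" "HOL-Computational_Algebra.Polynomial"
begin

definition pd_eta :: "(real \<Rightarrow> real \<Rightarrow> real) \<Rightarrow> real \<Rightarrow> real \<Rightarrow> real" where
  "pd_eta F = (\<lambda>\<eta> \<xi>. deriv (\<lambda>t. F t \<xi>) \<eta>)"

definition pd_xi :: "(real \<Rightarrow> real \<Rightarrow> real) \<Rightarrow> real \<Rightarrow> real \<Rightarrow> real" where
  "pd_xi F = (\<lambda>\<eta> \<xi>. deriv (\<lambda>t. F \<eta> t) \<xi>)"

fun iter_pd :: "bool list \<Rightarrow> (real \<Rightarrow> real \<Rightarrow> real) \<Rightarrow> real \<Rightarrow> real \<Rightarrow> real" where
  "iter_pd [] F = F"
| "iter_pd (b # ds) F = (if b then pd_eta else pd_xi) (iter_pd ds F)"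

definition smooth_on :: "(real \<times> real) set \<Rightarrow> (real \<Rightarrow> real \<Rightarrow> real) \<Rightarrow> bool" where
  "smooth_on U F \<longleftrightarrow>
     (\<forall>ds. continuous_on U (\<lambda>(\<eta>, \<xi>). iter_pd ds F \<eta> \<xi>) \<and>
       (\<forall>\<eta> \<xi>. (\<eta>, \<xi>) \<in> U \<longrightarrow>
          (\<lambda>t. iter_pd ds F t \<xi>) differentiable (at \<eta>) \<and>
          (\<lambda>t. iter_pd ds F \<eta> t) differentiable (at \<xi>)))"

text \<open>Bivariate polynomials of total degree at most m, represented by their
  coefficient functions c i j (coefficient of eta^i xi^j).\<close>
definition bipoly :: "nat \<Rightarrow> (nat \<Rightarrow> nat \<Rightarrow> real) set" where
  "bipoly m = {c. \<forall>i j. m < i + j \<longrightarrow> c i j = 0}"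

definition beval :: "nat \<Rightarrow> (nat \<Rightarrow> nat \<Rightarrow> real) \<Rightarrow> real \<Rightarrow> real \<Rightarrow> real" where
  "beval m c = (\<lambda>\<eta> \<xi>. \<Sum>i\<le>m. \<Sum>j\<le>m. c i j * \<eta> ^ i * \<xi> ^ j)"

definition Lop :: "(real \<Rightarrow> real \<Rightarrow> real) \<Rightarrow> (real \<Rightarrow> real \<Rightarrow> real) \<Rightarrow> (real \<Rightarrow> real \<Rightarrow> real)
     \<Rightarrow> (real \<Rightarrow> real \<Rightarrow> real) \<Rightarrow> real \<Rightarrow> real \<Rightarrow> real" where
  "Lop J0 J1 J2 u = (\<lambda>\<eta> \<xi>. pd_eta (pd_eta u) \<eta> \<xi> + J0 \<eta> \<xi> * pd_xi (pd_xi u) \<eta> \<xi>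
       + J1 \<eta> \<xi> * pd_eta u \<eta> \<xi> + J2 \<eta> \<xi> * pd_xi u \<eta> \<xi>)"

definition interface_conds ::
  "nat \<Rightarrow> real \<Rightarrow> real \<Rightarrow> (real \<Rightarrow> real \<Rightarrow> real) \<Rightarrow> (real \<Rightarrow> real \<Rightarrow> real)
   \<Rightarrow> (real \<Rightarrow> real \<Rightarrow> real) \<Rightarrow> real \<Rightarrow> real
   \<Rightarrow> (real \<Rightarrow> real \<Rightarrow> real) \<Rightarrow> (real \<Rightarrow> real \<Rightarrow> real) \<Rightarrow> bool" where
  "interface_conds m bm bp J0 J1 J2 \<xi>0 \<xi>1 um up \<longleftrightarrow>
     (\<forall>\<xi>\<in>{\<xi>0..\<xi>1}. up 0 \<xi> - um 0 \<xi> = 0) \<and>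
     (\<forall>\<xi>\<in>{\<xi>0..\<xi>1}. bp * pd_eta up 0 \<xi> - bm * pd_eta um 0 \<xi> = 0) \<and>
     (\<forall>j. j \<le> m - 2 \<and> 2 \<le> m \<longrightarrow>
        (\<forall>v :: real poly. degree v \<le> m - 2 - j \<longrightarrow>
           integral {\<xi>0..\<xi>1} (\<lambda>\<xi>. poly v \<xi> *
              (bp * (pd_eta ^^ j) (Lop J0 J1 J2 up) 0 \<xi>
               - bm * (pd_eta ^^ j) (Lop J0 J1 J2 um) 0 \<xi>)) = 0))"

end

theory Submission
  imports Defs "HOL-Complex_Analysis.Complex_Singularities"
begin

(*
  Write a polynomial piece as \<Sum>k \<eta>^k R_k(\<xi>), so that R_k is the k-th normal Taylor coefficient
  on the interface; P_m forces degree R_k \<le> m - k. Conditions (C1) and (C2) prescribe R_0 and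
  R_1 of the unknown piece. By the Leibniz rule, the j-th normal derivative of L(\<eta>^k \<xi>^l) at
  \<eta> = 0 vanishes for k > j + 2 and equals (j + 2)! \<xi>^l for k = j + 2, because J0, J1, J2 only
  multiply \<eta>^k and \<eta>^(k-1). Hence (C3) of order j states that R_(j+2) of the unknown piece
  is (up to the factor (j + 2)! \<beta>) the L2-projection onto P_(m-2-j) of a continuous function
  determined by R_0, ..., R_(j+1), which exists and is unique. Solving for the rows in
  increasing order gives existence and uniqueness of the other piece.
*)

section \<open>Higher derivatives of real functions\<close>

definition higher_differentiable_on :: "real set \<Rightarrow> (real \<Rightarrow> real) \<Rightarrow> bool" where
  "higher_differentiable_on S f \<longleftrightarrow> (\<forall>n. \<forall>x\<in>S. (deriv ^^ n) f differentiable (at x))"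

lemma has_real_derivative_higher_deriv:
  assumes "higher_differentiable_on S f" "x \<in> S"
  shows "((deriv ^^ n) f has_real_derivative (deriv ^^ Suc n) f x) (at x)"
  using assms DERIV_deriv_iff_real_differentiable unfolding higher_differentiable_on_def by auto

lemma higher_differentiable_onI:
  assumes "open S" "\<And>n x. x \<in> S \<Longrightarrow> (deriv ^^ n) f x = h n x"
    and "\<And>n x. x \<in> S \<Longrightarrow> h n differentiable (at x)"
  shows "higher_differentiable_on S f"
  unfolding higher_differentiable_on_def
proof (intro allI ballI)
  fix n x assume "x \<in> S"
  then obtain D where "(h n has_real_derivative D) (at x)"
    using assms(3) real_differentiable_def by blast
  then have "((deriv ^^ n) f has_real_derivative D) (at x)"
    using has_field_derivative_transform_within_open[of "h n" D x S] assms(1,2) \<open>x \<in> S\<close> by auto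
  then show "(deriv ^^ n) f differentiable (at x)"
    using real_differentiable_def by blast
qed

lemma higher_deriv_power_at_0:
  "(deriv ^^ i) (\<lambda>t::real. t ^ k) 0 = (if i = k then fact k else 0)"
  using higher_deriv_power[of i 0 k 0] by (auto simp: pochhammer_fact pochhammer_0_left)

lemma higher_differentiable_on_power: "higher_differentiable_on S (\<lambda>t. t ^ k)"
  unfolding higher_differentiable_on_def
proof (intro allI ballI)
  fix n and x :: real
  have closed_form: "(deriv ^^ n) (\<lambda>t::real. t ^ k) =
      (\<lambda>t. pochhammer (of_nat (Suc k - n)) n * t ^ (k - n))"
    using higher_deriv_power[of n 0 k] by auto
  show "(deriv ^^ n) (\<lambda>t. t ^ k) differentiable (at x)"
    unfolding closed_form
    by (intro differentiable_mult differentiable_const differentiable_power differentiable_ident)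
qed

lemma sum_choose_Suc_convolution:
  fixes a b :: "nat \<Rightarrow> real"
  shows "(\<Sum>i\<le>n. real (n choose i) * (a (Suc i) * b (n - i) + a i * b (Suc (n - i)))) =
         (\<Sum>i\<le>Suc n. real (Suc n choose i) * a i * b (Suc n - i))"
proof -
  have "(\<Sum>i\<le>Suc n. real (Suc n choose i) * a i * b (Suc n - i)) =
      (\<Sum>i\<le>n. real (n choose i) * a (Suc i) * b (n - i))
        + (a 0 * b (Suc n) + (\<Sum>i\<le>n. real (n choose Suc i) * a (Suc i) * b (n - i)))"
    by (subst sum.atMost_Suc_shift) (simp add: ring_distribs sum.distrib del: sum.atMost_Suc)
  moreover have "a 0 * b (Suc n) + (\<Sum>i\<le>n. real (n choose Suc i) * a (Suc i) * b (n - i)) =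
      (\<Sum>i\<le>Suc n. real (n choose i) * a i * b (Suc n - i))"
    by (subst sum.atMost_Suc_shift) (simp del: sum.atMost_Suc)
  moreover have "\<dots> = (\<Sum>i\<le>n. real (n choose i) * a i * b (Suc (n - i)))"
    by (simp add: Suc_diff_le)
  ultimately show ?thesis by (simp add: ring_distribs sum.distrib mult_ac)
qed

lemma higher_deriv_mult_real:
  assumes "open S" "higher_differentiable_on S f" "higher_differentiable_on S g" "x \<in> S"
  shows "(deriv ^^ n) (\<lambda>t. f t * g t) x =
           (\<Sum>i\<le>n. real (n choose i) * (deriv ^^ i) f x * (deriv ^^ (n - i)) g x)"
  using assms(4)
proof (induction n arbitrary: x)
  case 0 then show ?case by simp
next
  case (Suc n)
  have "\<forall>\<^sub>F t in nhds x. (deriv ^^ n) (\<lambda>t. f t * g t) t =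
          (\<Sum>i\<le>n. real (n choose i) * (deriv ^^ i) f t * (deriv ^^ (n - i)) g t)"
    using Suc.IH eventually_nhds assms(1) Suc.prems by blast
  then have "(deriv ^^ Suc n) (\<lambda>t. f t * g t) x =
      deriv (\<lambda>t. \<Sum>i\<le>n. real (n choose i) * (deriv ^^ i) f t * (deriv ^^ (n - i)) g t) x"
    by (simp add: deriv_cong_ev)
  also have "\<dots> = (\<Sum>i\<le>n. real (n choose i) *
      ((deriv ^^ Suc i) f x * (deriv ^^ (n - i)) g x + (deriv ^^ i) f x * (deriv ^^ Suc (n - i)) g x))"
    by (rule DERIV_imp_deriv)
      (auto intro!: derivative_eq_intros has_real_derivative_higher_deriv assms Suc.prems
        simp: algebra_simps)
  also have "\<dots> = (\<Sum>i\<le>Suc n. real (Suc n choose i) * (deriv ^^ i) f x * (deriv ^^ (Suc n - i)) g x)"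
    by (rule sum_choose_Suc_convolution)
  finally show ?case .
qed

lemma higher_differentiable_on_const: "higher_differentiable_on S (\<lambda>t. c)"
  unfolding higher_differentiable_on_def by simp

lemma higher_differentiable_on_mult:
  assumes "open S" "higher_differentiable_on S f" "higher_differentiable_on S g"
  shows "higher_differentiable_on S (\<lambda>t. f t * g t)"
  using assms(1) higher_deriv_mult_real[OF assms]
proof (rule higher_differentiable_onI)
  fix n x assume "x \<in> S"
  then show "(\<lambda>x. \<Sum>i\<le>n. real (n choose i) * (deriv ^^ i) f x * (deriv ^^ (n - i)) g x)
      differentiable (at x)"
    using assms(2,3) unfolding higher_differentiable_on_def
    by (intro differentiable_sum differentiable_mult differentiable_const) auto
qed

lemma higher_deriv_cmult_real:
  assumes "open S" "higher_differentiable_on S f" "x \<in> S"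
  shows "(deriv ^^ n) (\<lambda>t. c * f t) x = c * (deriv ^^ n) f x"
  using higher_deriv_mult_real[OF assms(1) higher_differentiable_on_const assms(2,3), of n c]
  by (simp add: if_distrib if_distribR cong: if_cong)

lemma higher_deriv_add_real:
  assumes "open S" "higher_differentiable_on S f" "higher_differentiable_on S g" "x \<in> S"
  shows "(deriv ^^ n) (\<lambda>t. f t + g t) x = (deriv ^^ n) f x + (deriv ^^ n) g x"
  using assms(4)
proof (induction n arbitrary: x)
  case 0 then show ?case by simp
next
  case (Suc n)
  have "\<forall>\<^sub>F t in nhds x. (deriv ^^ n) (\<lambda>t. f t + g t) t = (deriv ^^ n) f t + (deriv ^^ n) g t"
    using Suc.IH eventually_nhds assms(1) Suc.prems by blast
  then have "(deriv ^^ Suc n) (\<lambda>t. f t + g t) x = deriv (\<lambda>t. (deriv ^^ n) f t + (deriv ^^ n) g t) x"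
    by (simp add: deriv_cong_ev)
  also have "\<dots> = (deriv ^^ Suc n) f x + (deriv ^^ Suc n) g x"
    by (intro DERIV_imp_deriv DERIV_add has_real_derivative_higher_deriv[OF assms(2) Suc.prems]
        has_real_derivative_higher_deriv[OF assms(3) Suc.prems])
  finally show ?case .
qed

lemma higher_differentiable_on_add:
  assumes "open S" "higher_differentiable_on S f" "higher_differentiable_on S g"
  shows "higher_differentiable_on S (\<lambda>t. f t + g t)"
  using assms(1) higher_deriv_add_real[OF assms]
proof (rule higher_differentiable_onI)
  fix n x assume "x \<in> S"
  then show "(\<lambda>x. (deriv ^^ n) f x + (deriv ^^ n) g x) differentiable (at x)"
    using assms(2,3) unfolding higher_differentiable_on_def by (intro differentiable_add) auto
qed

lemma higher_deriv_sum_real: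
  assumes "open S" "finite A" "\<And>i. i \<in> A \<Longrightarrow> higher_differentiable_on S (f i)" "x \<in> S"
  shows "higher_differentiable_on S (\<lambda>t. \<Sum>i\<in>A. f i t) \<and>
    (deriv ^^ n) (\<lambda>t. \<Sum>i\<in>A. f i t) x = (\<Sum>i\<in>A. (deriv ^^ n) (f i) x)"
  using assms(2,3)
proof (induction A rule: finite_induct)
  case empty then show ?case by (simp add: higher_differentiable_on_const)
next
  case (insert i A)
  then show ?case
    using higher_differentiable_on_add[OF assms(1)] higher_deriv_add_real[OF assms(1) _ _ assms(4)]
    by simp
qed

lemma higher_deriv_power_mult_at_0:
  assumes "open S" "0 \<in> S" "higher_differentiable_on S \<psi>"
  shows "(deriv ^^ j) (\<lambda>t. t ^ n * \<psi> t) 0 =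
    (if n \<le> j then real (j choose n) * fact n * (deriv ^^ (j - n)) \<psi> 0 else 0)"
  using higher_deriv_mult_real[OF assms(1) higher_differentiable_on_power assms(3,2), of j n]
  by (simp add: higher_deriv_power_at_0 if_distrib if_distribR cong: if_cong)

lemmas higher_differentiable_on_intros =
  higher_differentiable_on_add higher_differentiable_on_mult higher_differentiable_on_const
  higher_differentiable_on_power

section \<open>Polynomials on an interval\<close>

lemma poly_eq_on_interval_imp_eq:
  fixes p q :: "real poly"
  assumes "a < b" "\<And>x. x \<in> {a..b} \<Longrightarrow> poly p x = poly q x"
  shows "p = q"
proof (rule ccontr)
  assume "p \<noteq> q"
  then have "finite {x. poly (p - q) x = 0}" by (intro poly_roots_finite) simp
  moreover have "{a..b} \<subseteq> {x. poly (p - q) x = 0}" using assms(2) by auto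
  ultimately show False using infinite_Icc[OF assms(1)] finite_subset by blast
qed

lemma integral_poly_square_pos:
  fixes q :: "real poly"
  assumes "a < b" "q \<noteq> 0"
  shows "integral {a..b} (\<lambda>x. poly q x * poly q x) > 0"
proof -
  have cont: "continuous_on {a..b} (\<lambda>x. poly q x * poly q x)" by (intro continuous_intros)
  have "integral {a..b} (\<lambda>x. poly q x * poly q x) \<ge> 0"
    by (intro integral_nonneg integrable_continuous_interval cont) auto
  moreover have "integral {a..b} (\<lambda>x. poly q x * poly q x) \<noteq> 0"
  proof
    assume "integral {a..b} (\<lambda>x. poly q x * poly q x) = 0"
    then have "\<And>x. x \<in> {a..b} \<Longrightarrow> poly q x = poly 0 x"
      using integral_eq_0_iff[OF cont assms(1)] by simp
    then show False using poly_eq_on_interval_imp_eq[OF assms(1)] assms(2) by blast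
  qed
  ultimately show ?thesis by simp
qed

lemma poly_projection_Suc:
  fixes a b :: real and q r v :: "real poly"
  assumes "a < b" "continuous_on {a..b} G"
    and r_orth: "\<And>w. \<forall>i\<ge>n. coeff w i = 0 \<Longrightarrow> integral {a..b} (\<lambda>x. poly w x * (G x - poly r x)) = 0"
    and q_lead: "coeff q n = 1" and q_deg: "\<forall>i\<ge>Suc n. coeff q i = 0"
    and q_orth: "\<And>w. \<forall>i\<ge>n. coeff w i = 0 \<Longrightarrow> integral {a..b} (\<lambda>x. poly w x * poly q x) = 0"
    and v: "\<forall>i\<ge>Suc n. coeff v i = 0"
  defines "c \<equiv> integral {a..b} (\<lambda>x. poly q x * (G x - poly r x)) / integral {a..b} (\<lambda>x. poly q x * poly q x)"
  shows "integral {a..b} (\<lambda>x. poly v x * (G x - poly (r + smult c q) x)) = 0"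
proof -
  let ?I = "{a..b}"
  define Q where "Q = integral ?I (\<lambda>x. poly q x * poly q x)"
  have "q \<noteq> 0" using q_lead by auto
  then have "Q > 0" unfolding Q_def by (rule integral_poly_square_pos[OF assms(1)])
  define w where "w = v - smult (coeff v n) q"
  have w: "\<forall>i\<ge>n. coeff w i = 0"
  proof (intro allI impI)
    fix i assume "n \<le> i"
    then consider "i = n" | "Suc n \<le> i" by linarith
    then show "coeff w i = 0" using v q_lead q_deg by cases (simp_all add: w_def)
  qed
  have integrable: "f integrable_on ?I" if "continuous_on ?I f" for f :: "real \<Rightarrow> real"
    using that by (rule integrable_continuous_interval)
  have split: "poly v x * (G x - poly (r + smult c q) x) =
      (poly w x * (G x - poly r x) - c * (poly w x * poly q x))
      + coeff v n * (poly q x * (G x - poly r x) - c * (poly q x * poly q x))" for x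
    by (simp add: w_def algebra_simps)
  have "integral ?I (\<lambda>x. poly v x * (G x - poly (r + smult c q) x)) =
      (integral ?I (\<lambda>x. poly w x * (G x - poly r x)) - c * integral ?I (\<lambda>x. poly w x * poly q x))
      + coeff v n * (integral ?I (\<lambda>x. poly q x * (G x - poly r x)) - c * Q)"
    unfolding Q_def split
    by (intro integral_unique has_integral_add has_integral_diff has_integral_mult_right
        integrable_integral integrable continuous_intros assms(2))
  also have "\<dots> = 0"
    using r_orth[OF w] q_orth[OF w] \<open>Q > 0\<close> by (simp add: c_def Q_def)
  finally show ?thesis .
qed

lemma poly_projection_exists:
  fixes a b :: real
  assumes "a < b"
  shows "continuous_on {a..b} G \<Longrightarrow> \<exists>r. (\<forall>i\<ge>n. coeff r i = 0) \<and>
    (\<forall>v. (\<forall>i\<ge>n. coeff v i = 0) \<longrightarrow> integral {a..b} (\<lambda>x. poly v x * (G x - poly r x)) = 0)"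
proof (induction n arbitrary: G)
  case 0
  have "(\<forall>i\<ge>0. coeff v i = 0) \<longleftrightarrow> v = 0" for v :: "real poly" by (simp add: poly_eq_iff)
  then show ?case by auto
next
  case (Suc n)
  obtain r where r: "\<forall>i\<ge>n. coeff r i = 0"
    and r_orth: "\<And>w. \<forall>i\<ge>n. coeff w i = 0 \<Longrightarrow> integral {a..b} (\<lambda>x. poly w x * (G x - poly r x)) = 0"
    using Suc.IH[OF Suc.prems] by blast
  obtain s where s: "\<forall>i\<ge>n. coeff s i = 0"
    and s_orth: "\<And>w. \<forall>i\<ge>n. coeff w i = 0 \<Longrightarrow> integral {a..b} (\<lambda>x. poly w x * (x ^ n - poly s x)) = 0"
    using Suc.IH[of "\<lambda>x. x ^ n"] continuous_on_power[OF continuous_on_id] by blast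
  \<comment> \<open>Gram-Schmidt: q is orthogonal to the polynomials of degree < n.\<close>
  define q where "q = monom 1 n - s"
  have q: "coeff q n = 1" "\<forall>i\<ge>Suc n. coeff q i = 0" using s by (simp_all add: q_def)
  have q_orth: "integral {a..b} (\<lambda>x. poly w x * poly q x) = 0" if "\<forall>i\<ge>n. coeff w i = 0" for w
    using s_orth[OF that] by (simp add: q_def poly_monom)
  define c where "c = integral {a..b} (\<lambda>x. poly q x * (G x - poly r x)) /
    integral {a..b} (\<lambda>x. poly q x * poly q x)"
  have "\<forall>i\<ge>Suc n. coeff (r + smult c q) i = 0" using r q by simp
  moreover have "integral {a..b} (\<lambda>x. poly v x * (G x - poly (r + smult c q) x)) = 0"
    if "\<forall>i\<ge>Suc n. coeff v i = 0" for v
    unfolding c_def using assms Suc.prems r_orth q q_orth that by (rule poly_projection_Suc)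
  ultimately show ?case by blast
qed

lemma poly_projection_ex1:
  fixes a b :: real
  assumes "a < b" "continuous_on {a..b} G"
  shows "\<exists>!p. degree p \<le> D \<and>
    (\<forall>v. degree v \<le> D \<longrightarrow> integral {a..b} (\<lambda>x. poly v x * (G x - poly p x)) = 0)"
proof (rule ex_ex1I)
  have degree_iff: "degree p \<le> D \<longleftrightarrow> (\<forall>i\<ge>Suc D. coeff p i = 0)" for p :: "real poly"
    by (auto intro: degree_le coeff_eq_0)
  show "\<exists>p. degree p \<le> D \<and>
      (\<forall>v. degree v \<le> D \<longrightarrow> integral {a..b} (\<lambda>x. poly v x * (G x - poly p x)) = 0)"
    unfolding degree_iff using poly_projection_exists[OF assms] .
next
  fix p1 p2 :: "real poly"
  assume p1: "degree p1 \<le> D \<and> (\<forall>v. degree v \<le> D \<longrightarrow> integral {a..b} (\<lambda>x. poly v x * (G x - poly p1 x)) = 0)"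
    and p2: "degree p2 \<le> D \<and> (\<forall>v. degree v \<le> D \<longrightarrow> integral {a..b} (\<lambda>x. poly v x * (G x - poly p2 x)) = 0)"
  define v where "v = p1 - p2"
  have "degree v \<le> D" using p1 p2 degree_diff_le unfolding v_def by blast
  then have "integral {a..b} (\<lambda>x. poly v x * (G x - poly p2 x)) - integral {a..b} (\<lambda>x. poly v x * (G x - poly p1 x)) = 0"
    using p1 p2 by simp
  moreover have "integral {a..b} (\<lambda>x. poly v x * (G x - poly p2 x)) - integral {a..b} (\<lambda>x. poly v x * (G x - poly p1 x)) =
      integral {a..b} (\<lambda>x. poly v x * poly v x)"
    by (subst integral_diff[symmetric])
      (auto simp: v_def algebra_simps intro!: integrable_continuous_interval continuous_intros assms(2))
  ultimately have "\<not> integral {a..b} (\<lambda>x. poly v x * poly v x) > 0" by simp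
  then have "v = 0" using integral_poly_square_pos[OF assms(1), of v] by auto
  then show "p1 = p2" by (simp add: v_def)
qed

lemma ex1_coeffs_if_ex1_poly:
  assumes "\<exists>!p. degree p \<le> D \<and> Q (coeff p)"
  shows "\<exists>!r. (\<forall>l>D. r l = 0) \<and> Q r"
proof -
  obtain p where p: "degree p \<le> D" "Q (coeff p)"
    and unique: "\<And>p'. degree p' \<le> D \<Longrightarrow> Q (coeff p') \<Longrightarrow> p' = p"
    using assms by blast
  show ?thesis
  proof (rule ex1I[of _ "coeff p"])
    show "(\<forall>l>D. coeff p l = 0) \<and> Q (coeff p)" using p by (auto intro: coeff_eq_0)
    fix r assume r: "(\<forall>l>D. r l = 0) \<and> Q r"
    then have "coeff (Abs_poly r) = r" by (intro coeff_Abs_poly) auto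
    with r have "Abs_poly r = p" by (intro unique degree_le) auto
    with \<open>coeff (Abs_poly r) = r\<close> show "r = coeff p" by simp
  qed
qed

section \<open>Triangular systems\<close>

lemma triangular_system_ex1:
  fixes P :: "nat \<Rightarrow> (nat \<Rightarrow> 'a) \<Rightarrow> bool"
  assumes local: "\<And>k b b'. k \<le> n \<Longrightarrow> (\<And>i. i \<le> k \<Longrightarrow> b i = b' i) \<Longrightarrow> P k b \<longleftrightarrow> P k b'"
    and solvable: "\<And>k b. k \<le> n \<Longrightarrow> \<exists>!r. r \<in> S k \<and> P k (b(k := r))"
  shows "\<exists>!b. (\<forall>k\<le>n. b k \<in> S k \<and> P k b) \<and> (\<forall>k>n. b k = z)"
proof (rule ex_ex1I)
  have "p \<le> Suc n \<Longrightarrow> \<exists>b. (\<forall>k<p. b k \<in> S k \<and> P k b) \<and> (\<forall>k\<ge>p. b k = z)" for p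
  proof (induction p)
    case 0 show ?case by (intro exI[of _ "\<lambda>_. z"]) simp
  next
    case (Suc p)
    then obtain b where b: "\<forall>k<p. b k \<in> S k \<and> P k b" "\<forall>k\<ge>p. b k = z" by auto
    obtain r where r: "r \<in> S p" "P p (b(p := r))" using solvable[of p b] Suc.prems by auto
    have below: "(b(p := r)) k \<in> S k \<and> P k (b(p := r))" if "k < Suc p" for k
    proof (cases "k = p")
      case False
      then have "k < p" using that by simp
      moreover have "P k (b(p := r)) \<longleftrightarrow> P k b"
        using \<open>k < p\<close> Suc.prems by (intro local) auto
      ultimately show ?thesis using b by simp
    qed (use r in simp)
    moreover have above: "(b(p := r)) k = z" if "k \<ge> Suc p" for k using b that by simp
    ultimately show ?case by (intro exI[of _ "b(p := r)"] conjI allI impI below above)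
  qed
  from this[of "Suc n"] show "\<exists>b. (\<forall>k\<le>n. b k \<in> S k \<and> P k b) \<and> (\<forall>k>n. b k = z)"
    by (simp add: less_Suc_eq_le Suc_le_eq)
next
  fix b1 b2
  assume b1: "(\<forall>k\<le>n. b1 k \<in> S k \<and> P k b1) \<and> (\<forall>k>n. b1 k = z)"
    and b2: "(\<forall>k\<le>n. b2 k \<in> S k \<and> P k b2) \<and> (\<forall>k>n. b2 k = z)"
  have "b1 k = b2 k" for k
  proof (induction k rule: less_induct)
    case (less k)
    show ?case
    proof (cases "k \<le> n")
      case True
      have "P k b1 \<longleftrightarrow> P k (b2(k := b1 k))" using True less.IH by (intro local) auto
      then have "P k (b2(k := b1 k))" using b1 True by simp
      then show ?thesis
        using solvable[OF True, of b2] b1 b2 True by (metis fun_upd_triv)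
    qed (use b1 b2 in auto)
  qed
  then show "b1 = b2" by blast
qed

section \<open>The transformed Laplacian near the interface\<close>

lemma funpow_pd_eta_eq_higher_deriv: "(pd_eta ^^ j) F \<eta> \<xi> = (deriv ^^ j) (\<lambda>t. F t \<xi>) \<eta>"
  by (induction j arbitrary: \<eta>) (simp_all add: pd_eta_def)

lemma open_slice:
  fixes U :: "(real \<times> real) set"
  shows "open U \<Longrightarrow> open {t. (t, \<xi>) \<in> U}"
  using continuous_open_vimage[of U "\<lambda>t::real. (t, \<xi>)"] by (simp add: vimage_def continuous_intros)

lemma iter_pd_replicate_True: "iter_pd (replicate n True) F = (pd_eta ^^ n) F"
  by (induction n) auto

lemma smooth_on_slice:
  assumes "smooth_on U J"
  shows "higher_differentiable_on {t. (t, \<xi>) \<in> U} (\<lambda>t. J t \<xi>)"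
  unfolding higher_differentiable_on_def
proof (intro allI ballI)
  fix n x assume "x \<in> {t. (t, \<xi>) \<in> U}"
  then have "(\<lambda>t. iter_pd (replicate n True) J t \<xi>) differentiable (at x)"
    using assms unfolding smooth_on_def by simp
  then show "(deriv ^^ n) (\<lambda>t. J t \<xi>) differentiable (at x)"
    by (simp add: iter_pd_replicate_True funpow_pd_eta_eq_higher_deriv)
qed

lemma continuous_on_pd_eta_trace:
  assumes "smooth_on U J" "\<And>\<xi>. \<xi> \<in> A \<Longrightarrow> (0, \<xi>) \<in> U"
  shows "continuous_on A (\<lambda>\<xi>. (pd_eta ^^ n) J 0 \<xi>)"
proof -
  have "continuous_on U (\<lambda>(\<eta>, \<xi>). (pd_eta ^^ n) J \<eta> \<xi>)"
    using assms(1) unfolding smooth_on_def by (metis iter_pd_replicate_True)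
  then have "continuous_on A ((\<lambda>(\<eta>, \<xi>). (pd_eta ^^ n) J \<eta> \<xi>) \<circ> (\<lambda>\<xi>. (0, \<xi>)))"
    by (intro continuous_on_compose continuous_intros) (auto intro: continuous_on_subset assms(2))
  then show ?thesis by (simp add: o_def)
qed

lemma pd_eta_sum_powers:
  "pd_eta (\<lambda>\<eta> \<xi>. \<Sum>k\<le>m. \<Sum>l\<le>m. C k l \<xi> * \<eta> ^ e k l) =
     (\<lambda>\<eta> \<xi>. \<Sum>k\<le>m. \<Sum>l\<le>m. C k l \<xi> * (real (e k l) * \<eta> ^ (e k l - 1)))"
  unfolding pd_eta_def
  by (intro ext DERIV_imp_deriv DERIV_sum DERIV_cmult) (auto intro!: derivative_eq_intros)

lemma pd_xi_sum_powers:
  "pd_xi (\<lambda>\<eta> \<xi>. \<Sum>k\<le>m. \<Sum>l\<le>m. C k l \<eta> * \<xi> ^ e k l) =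
     (\<lambda>\<eta> \<xi>. \<Sum>k\<le>m. \<Sum>l\<le>m. C k l \<eta> * (real (e k l) * \<xi> ^ (e k l - 1)))"
  unfolding pd_xi_def
  by (intro ext DERIV_imp_deriv DERIV_sum DERIV_cmult) (auto intro!: derivative_eq_intros)

lemma pd_eta_beval:
  "pd_eta (beval m c) = (\<lambda>\<eta> \<xi>. \<Sum>k\<le>m. \<Sum>l\<le>m. (c k l * \<xi> ^ l * real k) * \<eta> ^ (k - 1))"
proof -
  have eta: "beval m c = (\<lambda>\<eta> \<xi>. \<Sum>k\<le>m. \<Sum>l\<le>m. (c k l * \<xi> ^ l) * \<eta> ^ k)"
    unfolding beval_def by (simp add: mult_ac)
  show ?thesis
    unfolding eta pd_eta_sum_powers[where C="\<lambda>k l \<xi>. c k l * \<xi> ^ l" and e="\<lambda>k l. k"]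
    by (simp add: mult_ac)
qed

definition Lop_monomial ::
  "(real \<Rightarrow> real \<Rightarrow> real) \<Rightarrow> (real \<Rightarrow> real \<Rightarrow> real) \<Rightarrow> (real \<Rightarrow> real \<Rightarrow> real)
     \<Rightarrow> nat \<Rightarrow> nat \<Rightarrow> real \<Rightarrow> real \<Rightarrow> real" where
  "Lop_monomial J0 J1 J2 k l \<eta> \<xi> =
     real k * real (k - 1) * \<xi> ^ l * \<eta> ^ (k - 2)
     + real l * real (l - 1) * \<xi> ^ (l - 2) * (\<eta> ^ k * J0 \<eta> \<xi>)
     + real k * \<xi> ^ l * (\<eta> ^ (k - 1) * J1 \<eta> \<xi>)
     + real l * \<xi> ^ (l - 1) * (\<eta> ^ k * J2 \<eta> \<xi>)"

lemma Lop_beval: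
  "Lop J0 J1 J2 (beval m c) \<eta> \<xi> = (\<Sum>k\<le>m. \<Sum>l\<le>m. c k l * Lop_monomial J0 J1 J2 k l \<eta> \<xi>)"
proof -
  have xi: "beval m c = (\<lambda>\<eta> \<xi>. \<Sum>k\<le>m. \<Sum>l\<le>m. (c k l * \<eta> ^ k) * \<xi> ^ l)"
    unfolding beval_def by (simp add: mult_ac)
  note eta1 = pd_eta_beval
  have eta2: "pd_eta (pd_eta (beval m c)) =
      (\<lambda>\<eta> \<xi>. \<Sum>k\<le>m. \<Sum>l\<le>m. (c k l * \<xi> ^ l * real k) * (real (k - 1) * \<eta> ^ (k - 1 - 1)))"
    unfolding eta1 pd_eta_sum_powers[where C="\<lambda>k l \<xi>. c k l * \<xi> ^ l * real k" and e="\<lambda>k l. k - 1"] ..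
  have xi1: "pd_xi (beval m c) =
      (\<lambda>\<eta> \<xi>. \<Sum>k\<le>m. \<Sum>l\<le>m. (c k l * \<eta> ^ k * real l) * \<xi> ^ (l - 1))"
    unfolding xi pd_xi_sum_powers[where C="\<lambda>k l \<eta>. c k l * \<eta> ^ k" and e="\<lambda>k l. l"]
    by (simp add: mult_ac)
  have xi2: "pd_xi (pd_xi (beval m c)) =
      (\<lambda>\<eta> \<xi>. \<Sum>k\<le>m. \<Sum>l\<le>m. (c k l * \<eta> ^ k * real l) * (real (l - 1) * \<xi> ^ (l - 1 - 1)))"
    unfolding xi1 pd_xi_sum_powers[where C="\<lambda>k l \<eta>. c k l * \<eta> ^ k * real l" and e="\<lambda>k l. l - 1"] ..
  show ?thesis
    unfolding Lop_def eta2 xi2 unfolding eta1 xi1 Lop_monomial_def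
    by (simp add: diff_diff_left numeral_2_eq_2 distrib_left sum.distrib sum_distrib_left mult_ac)
qed

context
  fixes S :: "real set" and J0 J1 J2 :: "real \<Rightarrow> real \<Rightarrow> real" and \<xi> :: real
  assumes S: "open S" "0 \<in> S"
    and smooth: "higher_differentiable_on S (\<lambda>t. J0 t \<xi>)" "higher_differentiable_on S (\<lambda>t. J1 t \<xi>)"
      "higher_differentiable_on S (\<lambda>t. J2 t \<xi>)"
begin

lemma higher_differentiable_on_Lop_monomial:
  "higher_differentiable_on S (\<lambda>t. Lop_monomial J0 J1 J2 k l t \<xi>)"
  unfolding Lop_monomial_def by (intro higher_differentiable_on_intros smooth S)

lemma higher_deriv_Lop_monomial_at_0:
  "(deriv ^^ j) (\<lambda>t. Lop_monomial J0 J1 J2 k l t \<xi>) 0 =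
     real k * real (k - 1) * \<xi> ^ l * (if j = k - 2 then fact j else 0)
     + real l * real (l - 1) * \<xi> ^ (l - 2) *
         (if k \<le> j then real (j choose k) * fact k * (deriv ^^ (j - k)) (\<lambda>t. J0 t \<xi>) 0 else 0)
     + real k * \<xi> ^ l *
         (if k - 1 \<le> j then real (j choose (k - 1)) * fact (k - 1) * (deriv ^^ (j - (k - 1))) (\<lambda>t. J1 t \<xi>) 0 else 0)
     + real l * \<xi> ^ (l - 1) *
         (if k \<le> j then real (j choose k) * fact k * (deriv ^^ (j - k)) (\<lambda>t. J2 t \<xi>) 0 else 0)"
  unfolding Lop_monomial_def
  by ((subst higher_deriv_add_real[OF S(1) _ _ S(2)], (intro higher_differentiable_on_intros smooth S)+)+)
    (simp add: higher_deriv_cmult_real[OF S(1) _ S(2)] higher_deriv_power_mult_at_0[OF S]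
      higher_deriv_power_at_0 higher_differentiable_on_intros smooth S)

lemma higher_deriv_Lop_beval_at_0:
  "(deriv ^^ j) (\<lambda>t. Lop J0 J1 J2 (beval m c) t \<xi>) 0 =
     (\<Sum>k\<le>m. \<Sum>l\<le>m. c k l * (deriv ^^ j) (\<lambda>t. Lop_monomial J0 J1 J2 k l t \<xi>) 0)"
proof -
  have row: "higher_differentiable_on S (\<lambda>t. \<Sum>l\<le>m. c k l * Lop_monomial J0 J1 J2 k l t \<xi>) \<and>
      (deriv ^^ j) (\<lambda>t. \<Sum>l\<le>m. c k l * Lop_monomial J0 J1 J2 k l t \<xi>) 0 =
      (\<Sum>l\<le>m. c k l * (deriv ^^ j) (\<lambda>t. Lop_monomial J0 J1 J2 k l t \<xi>) 0)" for k
    using higher_deriv_sum_real[OF S(1) _ _ S(2), of "{..m}" "\<lambda>l t. c k l * Lop_monomial J0 J1 J2 k l t \<xi>" j]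
    by (simp add: higher_deriv_cmult_real[OF S(1) _ S(2)] higher_differentiable_on_intros
        higher_differentiable_on_Lop_monomial S)
  show ?thesis
    unfolding Lop_beval
    using higher_deriv_sum_real[OF S(1) _ _ S(2), of "{..m}" "\<lambda>k t. \<Sum>l\<le>m. c k l * Lop_monomial J0 J1 J2 k l t \<xi>" j]
    by (simp add: row)
qed

end

section \<open>The interface conditions as a triangular system\<close>

definition row_poly :: "nat \<Rightarrow> (nat \<Rightarrow> nat \<Rightarrow> real) \<Rightarrow> nat \<Rightarrow> real poly" where
  "row_poly m c k = (\<Sum>l\<le>m. monom (c k l) l)"

lemma poly_row_poly: "poly (row_poly m c k) x = (\<Sum>l\<le>m. c k l * x ^ l)"
  by (simp add: row_poly_def poly_sum poly_monom)

lemma row_poly_upd_coeff: "degree p \<le> m \<Longrightarrow> row_poly m (c(k := coeff p)) k = p"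
  by (simp add: row_poly_def poly_as_sum_of_monoms')

lemma degree_row_poly:
  assumes "c \<in> bipoly m"
  shows "degree (row_poly m c k) \<le> m - k"
  unfolding row_poly_def
proof (rule degree_sum_le)
  fix l assume "l \<in> {..m}"
  show "degree (monom (c k l) l) \<le> m - k"
  proof (cases "l \<le> m - k")
    case True then show ?thesis using degree_monom_le order.trans by blast
  next
    case False
    then have "c k l = 0" using assms unfolding bipoly_def by simp
    then show ?thesis by simp
  qed
qed simp

lemma bipoly_iff_rows:
  "c \<in> bipoly m \<longleftrightarrow> (\<forall>k\<le>m. c k \<in> {r. \<forall>l>m - k. r l = 0}) \<and> (\<forall>k>m. c k = (\<lambda>_. 0))"
proof -
  have "m < k + l \<longleftrightarrow> (k \<le> m \<longrightarrow> m - k < l)" for k l :: nat by arith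
  then show ?thesis unfolding bipoly_def fun_eq_iff mem_Collect_eq by (metis not_le)
qed

lemma beval_at_0: "beval m c 0 \<xi> = poly (row_poly m c 0) \<xi>"
proof -
  have "beval m c 0 \<xi> = (\<Sum>k\<le>m. if k = 0 then \<Sum>l\<le>m. c 0 l * \<xi> ^ l else 0)"
    unfolding beval_def by (intro sum.cong) (auto simp: zero_power)
  then show ?thesis by (simp add: poly_row_poly)
qed

lemma pd_eta_beval_at_0:
  assumes "1 \<le> m"
  shows "pd_eta (beval m c) 0 \<xi> = poly (row_poly m c 1) \<xi>"
proof -
  have "pd_eta (beval m c) 0 \<xi> = (\<Sum>k\<le>m. if k = 1 then \<Sum>l\<le>m. c 1 l * \<xi> ^ l else 0)"
    unfolding pd_eta_beval by (intro sum.cong) (auto simp: power_0_left le_Suc_eq)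
  then show ?thesis using assms by (simp add: poly_row_poly)
qed

(*
  E j k l is the j-th normal derivative of L(\<eta>^k \<xi>^l) on the interface, and jet j c the one
  of L applied to the polynomial with coefficient array c. In row_cond \<beta>a a \<beta>b b k the array a
  is the given piece and b the unknown one; the condition is (C1) for k = 0, (C2) for k = 1 and
  (C3) of order k - 2 otherwise, and it involves only the rows of b up to k.
*)
locale interface_system =
  fixes m :: nat and x0 x1 :: real and E :: "nat \<Rightarrow> nat \<Rightarrow> nat \<Rightarrow> real \<Rightarrow> real"
    and \<kappa> :: "nat \<Rightarrow> real"
  assumes interval: "x0 < x1"
    and continuous_E: "continuous_on {x0..x1} (E j k l)"
    and E_above_diagonal: "j + 2 < k \<Longrightarrow> \<xi> \<in> {x0..x1} \<Longrightarrow> E j k l \<xi> = 0"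
    and E_diagonal: "\<xi> \<in> {x0..x1} \<Longrightarrow> E j (j + 2) l \<xi> = \<kappa> j * \<xi> ^ l"
    and \<kappa>_nonzero: "\<kappa> j \<noteq> 0"
begin

definition jet :: "nat \<Rightarrow> (nat \<Rightarrow> nat \<Rightarrow> real) \<Rightarrow> real \<Rightarrow> real" where
  "jet j c \<xi> = (\<Sum>k\<le>m. \<Sum>l\<le>m. c k l * E j k l \<xi>)"

definition row_cond :: "real \<Rightarrow> (nat \<Rightarrow> nat \<Rightarrow> real) \<Rightarrow> real \<Rightarrow> (nat \<Rightarrow> nat \<Rightarrow> real) \<Rightarrow> nat \<Rightarrow> bool" where
  "row_cond \<beta>a a \<beta>b b k \<longleftrightarrow> (case k of
      0 \<Rightarrow> \<forall>\<xi>\<in>{x0..x1}. poly (row_poly m b 0) \<xi> = poly (row_poly m a 0) \<xi>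
    | Suc 0 \<Rightarrow> \<forall>\<xi>\<in>{x0..x1}. \<beta>b * poly (row_poly m b 1) \<xi> = \<beta>a * poly (row_poly m a 1) \<xi>
    | Suc (Suc j) \<Rightarrow> \<forall>v. degree v \<le> m - k \<longrightarrow>
        integral {x0..x1} (\<lambda>\<xi>. poly v \<xi> * (\<beta>b * jet j b \<xi> - \<beta>a * jet j a \<xi>)) = 0)"

lemma continuous_jet: "continuous_on {x0..x1} (jet j c)"
  unfolding jet_def[abs_def] by (intro continuous_intros continuous_E)

lemma jet_cong:
  assumes "\<And>k. k \<le> j + 2 \<Longrightarrow> c k = c' k" "\<xi> \<in> {x0..x1}"
  shows "jet j c \<xi> = jet j c' \<xi>"
  unfolding jet_def
proof (intro sum.cong refl)
  fix k l
  show "c k l * E j k l \<xi> = c' k l * E j k l \<xi>"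
    using assms E_above_diagonal[of j k \<xi> l] by (cases "k \<le> j + 2") auto
qed

lemma jet_upd_row:
  assumes "j + 2 \<le> m" "degree p \<le> m" "\<xi> \<in> {x0..x1}"
  shows "jet j (c(j + 2 := coeff p)) \<xi> = jet j (c(j + 2 := (\<lambda>_. 0))) \<xi> + \<kappa> j * poly p \<xi>"
proof -
  have "jet j (c(j + 2 := coeff p)) \<xi> - jet j (c(j + 2 := (\<lambda>_. 0))) \<xi> =
      (\<Sum>k\<le>m. if k = j + 2 then \<Sum>l\<le>m. coeff p l * E j (j + 2) l \<xi> else 0)"
    unfolding jet_def sum_subtractf[symmetric] by (intro sum.cong) (auto simp: left_diff_distrib)
  also have "\<dots> = (\<Sum>l\<le>m. coeff p l * E j (j + 2) l \<xi>)"
    using assms(1) by simp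
  also have "\<dots> = \<kappa> j * (\<Sum>l\<le>m. coeff p l * \<xi> ^ l)"
    unfolding sum_distrib_left using E_diagonal[OF assms(3)] by (intro sum.cong) auto
  also have "(\<Sum>l\<le>m. coeff p l * \<xi> ^ l) = poly p \<xi>"
    using poly_row_poly[of m "c(j + 2 := coeff p)" "j + 2"] row_poly_upd_coeff[OF assms(2)] by simp
  finally show ?thesis by (simp add: fun_upd_def)
qed

lemma row_cond_swap: "row_cond \<beta>a a \<beta>b b k \<longleftrightarrow> row_cond \<beta>b b \<beta>a a k"
proof -
  have "integral {x0..x1} (\<lambda>\<xi>. poly v \<xi> * (\<beta>b * jet j b \<xi> - \<beta>a * jet j a \<xi>)) =
      - integral {x0..x1} (\<lambda>\<xi>. poly v \<xi> * (\<beta>a * jet j a \<xi> - \<beta>b * jet j b \<xi>))" for v j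
    by (simp add: algebra_simps flip: integral_neg)
  then show ?thesis unfolding row_cond_def by (auto split: nat.split)
qed

lemma row_cond_cong:
  assumes "\<And>i. i \<le> k \<Longrightarrow> b i = b' i"
  shows "row_cond \<beta>a a \<beta>b b k \<longleftrightarrow> row_cond \<beta>a a \<beta>b b' k"
proof -
  have rows: "row_poly m b i = row_poly m b' i" if "i \<le> k" for i
    using assms[OF that] by (simp add: row_poly_def)
  consider "k = 0" | "k = 1" | j where "k = Suc (Suc j)" by (metis One_nat_def not0_implies_Suc)
  then show ?thesis
  proof cases
    case 3
    then have "jet j b \<xi> = jet j b' \<xi>" if "\<xi> \<in> {x0..x1}" for \<xi>
      using assms that by (intro jet_cong) auto
    then have "integral {x0..x1} (\<lambda>\<xi>. poly v \<xi> * (\<beta>b * jet j b \<xi> - \<beta>a * jet j a \<xi>)) =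
        integral {x0..x1} (\<lambda>\<xi>. poly v \<xi> * (\<beta>b * jet j b' \<xi> - \<beta>a * jet j a \<xi>))" for v
      by (intro integral_cong) simp
    then show ?thesis unfolding row_cond_def 3 by simp
  qed (use rows in \<open>auto simp: row_cond_def\<close>)
qed

lemma ex1_poly_eq_on_interval:
  fixes q :: "real poly"
  assumes "degree q \<le> D"
  shows "\<exists>!p. degree p \<le> D \<and> (\<forall>x\<in>{x0..x1}. poly p x = poly q x)"
  using assms poly_eq_on_interval_imp_eq[OF interval] by blast

lemma ex1_row_poly_trace:
  assumes "a \<in> bipoly m"
  shows "\<exists>!p. degree p \<le> m \<and> row_cond \<beta>a a \<beta>b (b(0 := coeff p)) 0"
proof -
  have eq: "row_cond \<beta>a a \<beta>b (b(0 := coeff p)) 0 \<longleftrightarrow> (\<forall>x\<in>{x0..x1}. poly p x = poly (row_poly m a 0) x)"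
    if "degree p \<le> m" for p
    using that by (simp add: row_cond_def row_poly_upd_coeff)
  have "degree (row_poly m a 0) \<le> m" using degree_row_poly[OF assms, of 0] by simp
  from ex1_poly_eq_on_interval[OF this] show ?thesis by (simp only: eq cong: conj_cong)
qed

lemma ex1_row_poly_flux:
  assumes "\<beta>b \<noteq> 0" "a \<in> bipoly m"
  shows "\<exists>!p. degree p \<le> m - 1 \<and> row_cond \<beta>a a \<beta>b (b(1 := coeff p)) 1"
proof -
  have eq: "row_cond \<beta>a a \<beta>b (b(1 := coeff p)) 1 \<longleftrightarrow>
      (\<forall>x\<in>{x0..x1}. poly p x = poly (smult (\<beta>a / \<beta>b) (row_poly m a 1)) x)"
    if "degree p \<le> m - 1" for p
    using that assms(1) by (auto simp: row_cond_def row_poly_upd_coeff field_simps)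
  have "degree (smult (\<beta>a / \<beta>b) (row_poly m a 1)) \<le> m - 1"
    using degree_row_poly[OF assms(2), of 1] by (simp add: order.trans[OF degree_smult_le])
  from ex1_poly_eq_on_interval[OF this] show ?thesis by (simp only: eq cong: conj_cong)
qed

lemma ex1_row_poly_jet:
  assumes "\<beta>b \<noteq> 0" "j + 2 \<le> m"
  shows "\<exists>!p. degree p \<le> m - (j + 2) \<and> row_cond \<beta>a a \<beta>b (b(j + 2 := coeff p)) (j + 2)"
proof -
  define G where "G \<xi> = (\<beta>a * jet j a \<xi> - \<beta>b * jet j (b(j + 2 := (\<lambda>_. 0))) \<xi>) / (\<beta>b * \<kappa> j)" for \<xi>
  have "continuous_on {x0..x1} G"
    unfolding G_def using assms(1) \<kappa>_nonzero by (intro continuous_intros continuous_jet) auto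
  have "row_cond \<beta>a a \<beta>b (b(j + 2 := coeff p)) (j + 2) \<longleftrightarrow>
      (\<forall>v. degree v \<le> m - (j + 2) \<longrightarrow> integral {x0..x1} (\<lambda>x. poly v x * (G x - poly p x)) = 0)"
    if "degree p \<le> m - (j + 2)" for p
  proof -
    have "poly v \<xi> * (\<beta>b * jet j (b(j + 2 := coeff p)) \<xi> - \<beta>a * jet j a \<xi>) =
        - (\<beta>b * \<kappa> j) * (poly v \<xi> * (G \<xi> - poly p \<xi>))" if "\<xi> \<in> {x0..x1}" for v \<xi>
      using jet_upd_row[of j p \<xi> b] that \<open>degree p \<le> m - (j + 2)\<close> assms \<kappa>_nonzero[of j]
      by (simp add: G_def field_simps)
    then have "integral {x0..x1} (\<lambda>\<xi>. poly v \<xi> * (\<beta>b * jet j (b(j + 2 := coeff p)) \<xi> - \<beta>a * jet j a \<xi>)) =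
        - (\<beta>b * \<kappa> j) * integral {x0..x1} (\<lambda>x. poly v x * (G x - poly p x))" for v
      by (subst integral_cong[of _ _ "\<lambda>x. - (\<beta>b * \<kappa> j) * (poly v x * (G x - poly p x))"]) simp_all
    then show ?thesis using assms(1) \<kappa>_nonzero[of j] by (simp add: row_cond_def)
  qed
  then show ?thesis
    using poly_projection_ex1[OF interval \<open>continuous_on {x0..x1} G\<close>, of "m - (j + 2)"]
    by (simp cong: conj_cong)
qed

lemma row_cond_solvable:
  assumes "\<beta>b \<noteq> 0" "a \<in> bipoly m" "k \<le> m"
  shows "\<exists>!r. r \<in> {r. \<forall>l>m - k. r l = 0} \<and> row_cond \<beta>a a \<beta>b (b(k := r)) k"
proof -
  consider "k = 0" | "k = 1" | j where "k = j + 2" by (metis add_2_eq_Suc' One_nat_def not0_implies_Suc)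
  then have "\<exists>!p. degree p \<le> m - k \<and> row_cond \<beta>a a \<beta>b (b(k := coeff p)) k"
    by cases (use ex1_row_poly_trace ex1_row_poly_flux ex1_row_poly_jet assms in auto)
  then show ?thesis using ex1_coeffs_if_ex1_poly by simp
qed

theorem ex1_row_conds:
  assumes "\<beta>b \<noteq> 0" "a \<in> bipoly m"
  shows "\<exists>!b. b \<in> bipoly m \<and> (\<forall>k\<le>m. row_cond \<beta>a a \<beta>b b k)"
proof -
  have "\<exists>!b. (\<forall>k\<le>m. b k \<in> {r. \<forall>l>m - k. r l = 0} \<and> row_cond \<beta>a a \<beta>b b k) \<and> (\<forall>k>m. b k = (\<lambda>_. 0))"
    using row_cond_cong row_cond_solvable[OF assms] by (rule triangular_system_ex1)
  then show ?thesis unfolding bipoly_iff_rows by (simp add: imp_conjR all_conj_distrib conj_ac)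
qed

lemma interface_conds_iff_row_conds:
  assumes "1 \<le> m"
    and jets: "\<And>j c \<xi>. \<xi> \<in> {x0..x1} \<Longrightarrow> (pd_eta ^^ j) (Lop J0 J1 J2 (beval m c)) 0 \<xi> = jet j c \<xi>"
  shows "interface_conds m \<beta>a \<beta>b J0 J1 J2 x0 x1 (beval m a) (beval m b) \<longleftrightarrow>
    (\<forall>k\<le>m. row_cond \<beta>a a \<beta>b b k)"
proof -
  have jet_integrals:
    "integral {x0..x1} (\<lambda>\<xi>. poly v \<xi> * (\<beta>b * (pd_eta ^^ j) (Lop J0 J1 J2 (beval m b)) 0 \<xi>
        - \<beta>a * (pd_eta ^^ j) (Lop J0 J1 J2 (beval m a)) 0 \<xi>)) =
     integral {x0..x1} (\<lambda>\<xi>. poly v \<xi> * (\<beta>b * jet j b \<xi> - \<beta>a * jet j a \<xi>))" for v j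
    by (intro integral_cong) (simp add: jets)
  have by_order: "(\<forall>k\<le>m. P k) \<longleftrightarrow> P 0 \<and> P 1 \<and> (\<forall>j. j \<le> m - 2 \<and> 2 \<le> m \<longrightarrow> P (Suc (Suc j)))"
    for P :: "nat \<Rightarrow> bool"
  proof
    assume R: "P 0 \<and> P 1 \<and> (\<forall>j. j \<le> m - 2 \<and> 2 \<le> m \<longrightarrow> P (Suc (Suc j)))"
    show "\<forall>k\<le>m. P k"
    proof (intro allI impI)
      fix k assume "k \<le> m"
      consider "k = 0" | "k = 1" | j where "k = Suc (Suc j)" by (metis One_nat_def not0_implies_Suc)
      then show "P k" using R \<open>k \<le> m\<close> by cases auto
    qed
  qed (use assms(1) in auto)
  show ?thesis
    unfolding interface_conds_def by_order
    by (simp add: row_cond_def beval_at_0 pd_eta_beval_at_0[OF assms(1)] jet_integrals diff_diff_left)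
qed

end

context
  fixes U :: "(real \<times> real) set" and J0 J1 J2 :: "real \<Rightarrow> real \<Rightarrow> real" and \<xi>0 \<xi>1 :: real
  assumes U: "open U" "smooth_on U J0" "smooth_on U J1" "smooth_on U J2"
    and segment: "\<And>\<xi>. \<xi> \<in> {\<xi>0..\<xi>1} \<Longrightarrow> (0, \<xi>) \<in> U"
begin

lemma interface_slice:
  assumes "\<xi> \<in> {\<xi>0..\<xi>1}"
  shows "open {t. (t, \<xi>) \<in> U}" "0 \<in> {t. (t, \<xi>) \<in> U}"
    "higher_differentiable_on {t. (t, \<xi>) \<in> U} (\<lambda>t. J0 t \<xi>)"
    "higher_differentiable_on {t. (t, \<xi>) \<in> U} (\<lambda>t. J1 t \<xi>)"
    "higher_differentiable_on {t. (t, \<xi>) \<in> U} (\<lambda>t. J2 t \<xi>)"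
  using open_slice[OF U(1)] segment[OF assms] smooth_on_slice U(2-4) by auto

lemma pd_eta_Lop_beval_at_0:
  "\<xi> \<in> {\<xi>0..\<xi>1} \<Longrightarrow> (pd_eta ^^ j) (Lop J0 J1 J2 (beval m c)) 0 \<xi> =
     (\<Sum>k\<le>m. \<Sum>l\<le>m. c k l * (pd_eta ^^ j) (Lop_monomial J0 J1 J2 k l) 0 \<xi>)"
  unfolding funpow_pd_eta_eq_higher_deriv by (rule higher_deriv_Lop_beval_at_0[OF interface_slice])

lemma pd_eta_Lop_monomial_at_0:
  "\<xi> \<in> {\<xi>0..\<xi>1} \<Longrightarrow> (pd_eta ^^ j) (Lop_monomial J0 J1 J2 k l) 0 \<xi> =
     real k * real (k - 1) * \<xi> ^ l * (if j = k - 2 then fact j else 0)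
     + real l * real (l - 1) * \<xi> ^ (l - 2) *
         (if k \<le> j then real (j choose k) * fact k * (pd_eta ^^ (j - k)) J0 0 \<xi> else 0)
     + real k * \<xi> ^ l *
         (if k - 1 \<le> j then real (j choose (k - 1)) * fact (k - 1) * (pd_eta ^^ (j - (k - 1))) J1 0 \<xi> else 0)
     + real l * \<xi> ^ (l - 1) *
         (if k \<le> j then real (j choose k) * fact k * (pd_eta ^^ (j - k)) J2 0 \<xi> else 0)"
  unfolding funpow_pd_eta_eq_higher_deriv by (rule higher_deriv_Lop_monomial_at_0[OF interface_slice])

lemma interface_system_Lop_monomial:
  assumes "\<xi>0 < \<xi>1"
  shows "interface_system \<xi>0 \<xi>1 (\<lambda>j k l \<xi>. (pd_eta ^^ j) (Lop_monomial J0 J1 J2 k l) 0 \<xi>) (\<lambda>j. fact (j + 2))"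
proof
  show "\<xi>0 < \<xi>1" by fact
  fix j k l
  show "fact (j + 2) \<noteq> (0 :: real)" by simp
  have continuous_if: "continuous_on {\<xi>0..\<xi>1} (\<lambda>\<xi>. if P then f \<xi> else 0)"
    if "continuous_on {\<xi>0..\<xi>1} f" for P and f :: "real \<Rightarrow> real"
    using that by (cases P) auto
  show "continuous_on {\<xi>0..\<xi>1} (\<lambda>\<xi>. (pd_eta ^^ j) (Lop_monomial J0 J1 J2 k l) 0 \<xi>)"
    by (subst continuous_on_cong[OF refl pd_eta_Lop_monomial_at_0])
      (auto intro!: continuous_intros continuous_if continuous_on_pd_eta_trace U segment)
  show "(pd_eta ^^ j) (Lop_monomial J0 J1 J2 k l) 0 \<xi> = 0"
    if "j + 2 < k" and \<xi>: "\<xi> \<in> {\<xi>0..\<xi>1}" for \<xi>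
  proof -
    have "j \<noteq> k - 2" "\<not> k \<le> j" "\<not> k - 1 \<le> j" using that(1) by arith+
    then show ?thesis by (simp add: pd_eta_Lop_monomial_at_0[OF \<xi>])
  qed
  fix \<xi> assume \<xi>: "\<xi> \<in> {\<xi>0..\<xi>1}"
  show "(pd_eta ^^ j) (Lop_monomial J0 J1 J2 (j + 2) l) 0 \<xi> = fact (j + 2) * \<xi> ^ l"
    by (simp add: pd_eta_Lop_monomial_at_0[OF \<xi>] fact_Suc algebra_simps)
qed

end

theorem lemma2:
  fixes m :: nat and s :: bool
    and K :: "(real \<times> real) set"
    and \<xi>0 \<xi>1 bm bp :: real
    and J0 J1 J2 :: "real \<Rightarrow> real \<Rightarrow> real"
  assumes "1 \<le> m"
    and "bounded K"
    and "\<xi>0 < \<xi>1"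
    and "{(0, \<xi>) | \<xi>. \<xi>0 \<le> \<xi> \<and> \<xi> \<le> \<xi>1} \<subseteq> closure K"
    and "0 < bm" and "0 < bp"
    and "\<exists>U. open U \<and> closure K \<subseteq> U \<and> smooth_on U J0 \<and> smooth_on U J1 \<and> smooth_on U J2"
  shows "\<forall>a \<in> bipoly m. \<exists>!b. b \<in> bipoly m \<and>
           (if s then interface_conds m bm bp J0 J1 J2 \<xi>0 \<xi>1 (beval m b) (beval m a)
                 else interface_conds m bm bp J0 J1 J2 \<xi>0 \<xi>1 (beval m a) (beval m b))"
proof -
  obtain U where U: "open U" "closure K \<subseteq> U" "smooth_on U J0" "smooth_on U J1" "smooth_on U J2"
    using assms(7) by blast
  have segment: "(0, \<xi>) \<in> U" if "\<xi> \<in> {\<xi>0..\<xi>1}" for \<xi> using assms(4) U(2) that by auto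
  interpret interface_system m \<xi>0 \<xi>1 "\<lambda>j k l \<xi>. (pd_eta ^^ j) (Lop_monomial J0 J1 J2 k l) 0 \<xi>"
    "\<lambda>j. fact (j + 2)"
    using interface_system_Lop_monomial[OF U(1,3-5) segment assms(3)] .
  have conds: "interface_conds m bm bp J0 J1 J2 \<xi>0 \<xi>1 (beval m X) (beval m Y) \<longleftrightarrow>
      (\<forall>k\<le>m. row_cond bm X bp Y k)" for X Y
    using assms(1) pd_eta_Lop_beval_at_0[OF U(1,3-5) segment]
    by (intro interface_conds_iff_row_conds) (simp_all add: jet_def)
  show ?thesis
    using ex1_row_conds[of bm _ bp] ex1_row_conds[of bp _ bm] assms(5,6)
    by (cases s) (simp_all add: conds row_cond_swap[of bm _ bp])
qed

end
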